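(* Let $f(x,y)=\mathbb{E}_{\xi\sim\mathcal{D}}[f(x,y;\xi)]$ on $\mathbb{R}^d\times\mathbb{R}^p$, $F(x)=\max_y f(x,y)$, and assume: (A1) there is $\mu>0$ such that for every $x$ the set $\arg\max_y f(x,y)$ is nonempty and $\|\nabla_y f(x,y)\|^2\ge2\mu\big(\max_{y'}f(x,y')-f(x,y)\big)$ for all $y$; (A2) for every $\xi$, $\nabla_x f(\cdot,\cdot;\xi)$ and $\nabla_y f(\cdot,\cdot;\xi)$ are $L_f$-Lipschitz in each of the arguments $x$ and $y$ separately. Let $\{x_t,y_t,\tilde x_t,\tilde y_t,v_t\}$ be generated by the MSGDA algorithm (see context). If $0<\gamma\le\frac{\lambda\mu}{16L}$ and $0<\lambda\le\frac{1}{2L_f\eta_t}$ for all $t\ge1$, then for all $t\ge1$, $$F(x_{t+1})-f(x_{t+1},y_{t+1})\le\Big(1-\frac{\eta_t\lambda\mu}{2}\Big)\big(F(x_t)-f(x_t,y_t)\big)+\frac{\eta_t}{8\gamma}\|\tilde x_{t+1}-x_t\|^2-\frac{\eta_t}{4\lambda}\|\tilde y_{t+1}-y_t\|^2+\eta_t\lambda\|\nabla_y f(x_t,y_t)-v_t\|^2,$$ where $F(x_t)=f(x_t,y^*(x_t))$ with $y^*(x_t)\in\arg\max_y f(x_t,y)$.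
   Context: $\kappa=L_f/\mu$, $L=L_f(1+\kappa/2)$. MSGDA algorithm: given constants $\gamma,\lambda>0$, sequences $\eta_t>0$ and $\alpha_t,\beta_t\in(0,1]$, initial points $x_1,y_1$, and samples $\xi_1,\xi_2,\dots$ drawn i.i.d. from $\mathcal{D}$: set $v_1=\nabla_y f(x_1,y_1;\xi_1)$, $w_1=\nabla_x f(x_1,y_1;\xi_1)$, and for $t\ge1$: $\tilde y_{t+1}=y_t+\lambda v_t$, $\tilde x_{t+1}=x_t-\gamma w_t$; $y_{t+1}=y_t+\eta_t(\tilde y_{t+1}-y_t)$, $x_{t+1}=x_t+\eta_t(\tilde x_{t+1}-x_t)$; $v_{t+1}=\nabla_y f(x_{t+1},y_{t+1};\xi_{t+1})+(1-\alpha_{t+1})[v_t-\nabla_y f(x_t,y_t;\xi_{t+1})]$; $w_{t+1}=\nabla_x f(x_{t+1},y_{t+1};\xi_{t+1})+(1-\beta_{t+1})[w_t-\nabla_x f(x_t,y_t;\xi_{t+1})]$. *)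

theory Defs
  imports "HOL-Analysis.Analysis" "HOL-Probability.Probability"
begin

definition gradx :: "('x::real_inner \<Rightarrow> 'y \<Rightarrow> real) \<Rightarrow> 'x \<Rightarrow> 'y \<Rightarrow> 'x" where
  "gradx g x y = (SOME D. GDERIV (\<lambda>u. g u y) x :> D)"

definition grady :: "('x \<Rightarrow> 'y::real_inner \<Rightarrow> real) \<Rightarrow> 'x \<Rightarrow> 'y \<Rightarrow> 'y" where
  "grady g x y = (SOME D. GDERIV (\<lambda>u. g x u) y :> D)"

definition expf :: "'xi measure \<Rightarrow> ('xi \<Rightarrow> 'x \<Rightarrow> 'y \<Rightarrow> real) \<Rightarrow> 'x \<Rightarrow> 'y \<Rightarrow> real" where
  "expf D fs x y = (\<integral>\<xi>. fs \<xi> x y \<partial>D)"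

definition maxf :: "('x \<Rightarrow> 'y \<Rightarrow> real) \<Rightarrow> 'x \<Rightarrow> real" where
  "maxf f x = (SUP y. f x y)"

end

theory Submission
  imports Defs
begin

(* One MSGDA step moves x by d = \<eta> (x~ - x) and y by \<rho> v with \<rho> = \<eta> \<lambda>. The ascent step in y
   contracts the gap F(x') - f(x', y) by the factor 1 - \<rho> \<mu> (smoothness in y plus the PL
   inequality) up to an error \<rho>/2 |grad_y f(x', y) - v|^2, which the Lipschitz continuity of
   grad_y f in x compares with the error of v at (x, y). Moving x changes the gap by at most the old
   gap plus L_f |u - y| |d| + L_f |d|^2, where u is any near-maximizer of f(x', .). PL implies
   quadratic growth, so u can be taken with |u - y|^2 of order (F(x') - f(x', y)) / \<mu>, and Young's
   inequality absorbs the cross term into half of the contraction. Smoothness of f and Lipschitz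
   continuity of its partial gradients are inherited from the samples by exchanging gradient and
   expectation. *)

text \<open>A two-sided first-order bound. It follows from a Lipschitz gradient and, unlike the latter,
  passes to expectations simply by integrating it.\<close>

definition smooth_with :: "real \<Rightarrow> ('a::real_inner \<Rightarrow> real) \<Rightarrow> ('a \<Rightarrow> 'a) \<Rightarrow> bool" where
  "smooth_with L \<phi> G \<longleftrightarrow> (\<forall>u h. \<bar>\<phi> (u + h) - \<phi> u - G u \<bullet> h\<bar> \<le> L / 2 * (norm h)\<^sup>2)"

lemma smooth_withD:
  assumes "smooth_with L \<phi> G"
  shows smooth_with_lower: "\<phi> u + G u \<bullet> h - L / 2 * (norm h)\<^sup>2 \<le> \<phi> (u + h)"
    and smooth_with_upper: "\<phi> (u + h) \<le> \<phi> u + G u \<bullet> h + L / 2 * (norm h)\<^sup>2"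
  using assms[unfolded smooth_with_def abs_le_iff, rule_format, of u h] by auto

lemma has_real_derivative_along_line:
  fixes \<phi> :: "'a::real_inner \<Rightarrow> real"
  assumes "\<And>u. GDERIV \<phi> u :> G u"
  shows "((\<lambda>t. \<phi> (u + t *\<^sub>R h)) has_real_derivative G (u + t *\<^sub>R h) \<bullet> h) (at t)"
proof -
  have "((\<lambda>t. u + t *\<^sub>R h) has_derivative (\<lambda>k. k *\<^sub>R h)) (at t)"
    by (auto intro!: derivative_eq_intros)
  from has_derivative_compose[OF this assms[of "u + t *\<^sub>R h", unfolded gderiv_def]]
  show ?thesis
    unfolding has_field_derivative_def by (rule has_derivative_eq_rhs) (auto simp: inner_commute)
qed

lemma lipschitz_gradient_imp_smooth_with:
  fixes \<phi> :: "'a::real_inner \<Rightarrow> real"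
  assumes grad: "\<And>u. GDERIV \<phi> u :> G u" and lip: "L-lipschitz_on UNIV G"
  shows "smooth_with L \<phi> G"
  unfolding smooth_with_def
proof (intro allI)
  fix u h
  define e where "e t = \<phi> (u + t *\<^sub>R h) - \<phi> u - t * (G u \<bullet> h)" for t
  have e': "(e has_real_derivative (G (u + t *\<^sub>R h) - G u) \<bullet> h) (at t)" for t
    unfolding e_def inner_diff_left
    by (auto intro!: derivative_eq_intros has_real_derivative_along_line[OF grad])
  have e'_bound: "\<bar>(G (u + t *\<^sub>R h) - G u) \<bullet> h\<bar> \<le> L * t * (norm h)\<^sup>2" if "0 \<le> t" for t
  proof -
    have "\<bar>(G (u + t *\<^sub>R h) - G u) \<bullet> h\<bar> \<le> norm (G (u + t *\<^sub>R h) - G u) * norm h"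
      by (rule Cauchy_Schwarz_ineq2)
    also have "\<dots> \<le> L * norm (t *\<^sub>R h) * norm h"
      using lipschitz_on_normD[OF lip, of "u + t *\<^sub>R h" u] by (simp add: mult_right_mono)
    finally show ?thesis
      using that by (simp add: power2_eq_square mult.assoc)
  qed
  have "\<sigma> * e 1 - L / 2 * (norm h)\<^sup>2 \<le> \<sigma> * e 0" if "\<bar>\<sigma>\<bar> = 1" for \<sigma> :: real
  proof -
    let ?w = "\<lambda>t. \<sigma> * e t - L / 2 * t\<^sup>2 * (norm h)\<^sup>2"
    have "?w 1 \<le> ?w 0"
    proof (rule DERIV_nonpos_imp_nonincreasing[of 0 1])
      fix t :: real assume "0 \<le> t" "t \<le> 1"
      have "\<sigma> * ((G (u + t *\<^sub>R h) - G u) \<bullet> h) \<le> L * t * (norm h)\<^sup>2"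
        using e'_bound[OF \<open>0 \<le> t\<close>] abs_ge_self[of "\<sigma> * ((G (u + t *\<^sub>R h) - G u) \<bullet> h)"] that
        by (simp add: abs_mult)
      then show "\<exists>y. (?w has_real_derivative y) (at t) \<and> y \<le> 0"
        by (intro exI conjI) (auto intro!: derivative_eq_intros e' simp: mult_ac)
    qed simp
    then show ?thesis by simp
  qed
  from this[of 1] this[of "-1"]
  show "\<bar>\<phi> (u + h) - \<phi> u - G u \<bullet> h\<bar> \<le> L / 2 * (norm h)\<^sup>2"
    unfolding abs_le_iff by (simp add: e_def)
qed

lemma smooth_with_imp_gderiv:
  fixes \<phi> :: "'a::real_inner \<Rightarrow> real"
  assumes "smooth_with L \<phi> G"
  shows "GDERIV \<phi> u :> G u"
  unfolding gderiv_def has_derivative_at_alt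
proof (intro conjI allI impI)
  show "bounded_linear (\<lambda>h. h \<bullet> G u)"
    by (rule bounded_linear_inner_left)
  fix e :: real assume "e > 0"
  show "\<exists>d>0. \<forall>v. norm (v - u) < d \<longrightarrow> norm (\<phi> v - \<phi> u - (v - u) \<bullet> G u) \<le> e * norm (v - u)"
  proof (intro exI[of _ "e / (\<bar>L\<bar> + 1)"] conjI allI impI)
    show "0 < e / (\<bar>L\<bar> + 1)"
      using \<open>e > 0\<close> by simp
    fix v assume v: "norm (v - u) < e / (\<bar>L\<bar> + 1)"
    have "norm (\<phi> v - \<phi> u - (v - u) \<bullet> G u) \<le> L / 2 * (norm (v - u))\<^sup>2"
      using assms[unfolded smooth_with_def, rule_format, of u "v - u"] by (simp add: inner_commute)
    also have "\<dots> \<le> (\<bar>L\<bar> + 1) * (norm (v - u))\<^sup>2"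
      by (intro mult_right_mono) auto
    also have "\<dots> = ((\<bar>L\<bar> + 1) * norm (v - u)) * norm (v - u)"
      by (simp add: power2_eq_square)
    also have "\<dots> \<le> e * norm (v - u)"
      using v by (intro mult_right_mono) (auto simp: field_simps)
    finally show "norm (\<phi> v - \<phi> u - (v - u) \<bullet> G u) \<le> e * norm (v - u)" .
  qed
qed

lemma gderiv_unique:
  assumes "GDERIV \<phi> u :> D1" and "GDERIV \<phi> u :> D2"
  shows "D1 = D2"
proof -
  have "(\<lambda>h. h \<bullet> D1) = (\<lambda>h. h \<bullet> D2)"
    using has_derivative_unique assms unfolding gderiv_def by blast
  then have "(D1 - D2) \<bullet> (D1 - D2) = 0"
    by (metis inner_diff_right right_minus_eq)
  then show ?thesis by simp
qed

lemma gradx_eq: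
  assumes "GDERIV (\<lambda>u. g u y) x :> D"
  shows "gradx g x y = D"
  unfolding gradx_def using assms by (blast intro: gderiv_unique)

lemma gderiv_gradx:
  assumes "\<exists>D. GDERIV (\<lambda>u. g u y) x :> D"
  shows "GDERIV (\<lambda>u. g u y) x :> gradx g x y"
  unfolding gradx_def using assms by (rule someI_ex)

lemma grady_eq_gradx_swap: "grady g x y = gradx (\<lambda>y x. g x y) y x"
  by (simp add: grady_def gradx_def)

lemma le_maxf:
  assumes "\<exists>b. \<forall>b'. f a b' \<le> f a b"
  shows "f a b \<le> maxf f a"
  using assms unfolding maxf_def by (auto intro!: cSUP_upper)

lemma borel_measurable_gderiv_inner:
  fixes g :: "'s \<Rightarrow> 'a::real_inner \<Rightarrow> real"
  assumes meas: "\<And>u. (\<lambda>s. g s u) \<in> borel_measurable M"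
    and grad: "\<And>s u. s \<in> space M \<Longrightarrow> GDERIV (g s) u :> G s u"
  shows "(\<lambda>s. G s u \<bullet> h) \<in> borel_measurable M"
proof (rule borel_measurable_LIMSEQ_real)
  let ?k = "\<lambda>i. inverse (real (Suc i))"
  fix s assume "s \<in> space M"
  have "((\<lambda>k. (g s (u + k *\<^sub>R h) - g s u) / k) \<longlongrightarrow> G s u \<bullet> h) (at 0)"
    using has_real_derivative_along_line[OF grad[OF \<open>s \<in> space M\<close>], of u h 0]
    by (simp add: DERIV_def)
  moreover have "filterlim ?k (at 0) sequentially"
    using filterlim_compose[OF filterlim_inverse_at_right_top
        filterlim_Suc[THEN filterlim_compose[OF filterlim_real_sequentially]]]
    by (auto intro: filterlim_mono at_within_le_at)
  ultimately show "(\<lambda>i. (g s (u + ?k i *\<^sub>R h) - g s u) / ?k i) \<longlonglongrightarrow> G s u \<bullet> h"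
    by (rule filterlim_compose)
next
  show "(\<lambda>s. (g s (u + inverse (real (Suc i)) *\<^sub>R h) - g s u) / inverse (real (Suc i)))
      \<in> borel_measurable M" for i
    using meas by measurable
qed

context prob_space
begin

lemma integrable_gradient:
  fixes g :: "'a \<Rightarrow> 'b::euclidean_space \<Rightarrow> real"
  assumes int: "\<And>u. integrable M (\<lambda>s. g s u)"
    and smooth: "\<And>s. s \<in> space M \<Longrightarrow> smooth_with L (g s) (G s)"
  shows "integrable M (\<lambda>s. G s u)"
proof -
  have "integrable M (\<lambda>s. G s u \<bullet> b)" for b
  proof (rule Bochner_Integration.integrable_bound)
    show "integrable M (\<lambda>s. \<bar>g s (u + b) - g s u\<bar> + L / 2 * (norm b)\<^sup>2)"
      using int by auto
    show "(\<lambda>s. G s u \<bullet> b) \<in> borel_measurable M"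
      using borel_measurable_integrable[OF int] smooth_with_imp_gderiv[OF smooth]
      by (rule borel_measurable_gderiv_inner)
    have "\<bar>G s u \<bullet> b\<bar> \<le> \<bar>g s (u + b) - g s u\<bar> + L / 2 * (norm b)\<^sup>2" if "s \<in> space M" for s
    proof -
      have "\<bar>g s (u + b) - g s u - G s u \<bullet> b\<bar> \<le> L / 2 * (norm b)\<^sup>2"
        using smooth[OF that] by (simp add: smooth_with_def)
      then show ?thesis
        by arith
    qed
    then show "AE s in M. norm (G s u \<bullet> b) \<le> norm (\<bar>g s (u + b) - g s u\<bar> + L / 2 * (norm b)\<^sup>2)"
      by (intro AE_I2) (auto intro: order_trans[OF _ abs_ge_self])
  qed
  then have "integrable M (\<lambda>s. \<Sum>b\<in>Basis. (G s u \<bullet> b) *\<^sub>R b)"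
    by auto
  then show ?thesis
    by (simp add: euclidean_representation)
qed

lemma smooth_with_expectation:
  fixes g :: "'a \<Rightarrow> 'b::euclidean_space \<Rightarrow> real"
  assumes int: "\<And>u. integrable M (\<lambda>s. g s u)"
    and smooth: "\<And>s. s \<in> space M \<Longrightarrow> smooth_with L (g s) (G s)"
  shows "smooth_with L (\<lambda>u. \<integral>s. g s u \<partial>M) (\<lambda>u. \<integral>s. G s u \<partial>M)"
  unfolding smooth_with_def
proof (intro allI)
  fix u h
  have intG: "integrable M (\<lambda>s. G s u)"
    using int smooth by (rule integrable_gradient)
  have "(\<integral>s. g s (u + h) \<partial>M) - (\<integral>s. g s u \<partial>M) - (\<integral>s. G s u \<partial>M) \<bullet> h
        = (\<integral>s. g s (u + h) - g s u - G s u \<bullet> h \<partial>M)"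
    using int intG by simp
  also have "\<bar>\<dots>\<bar> \<le> (\<integral>s. \<bar>g s (u + h) - g s u - G s u \<bullet> h\<bar> \<partial>M)"
    by (rule integral_abs_bound)
  also have "\<dots> \<le> L / 2 * (norm h)\<^sup>2"
    using int intG smooth by (intro integral_le_const AE_I2) (auto simp: smooth_with_def)
  finally show "\<bar>(\<integral>s. g s (u + h) \<partial>M) - (\<integral>s. g s u \<partial>M) - (\<integral>s. G s u \<partial>M) \<bullet> h\<bar>
      \<le> L / 2 * (norm h)\<^sup>2" .
qed

lemma norm_integral_diff_le:
  fixes G1 G2 :: "'a \<Rightarrow> 'b::{banach, second_countable_topology}"
  assumes "integrable M G1" and "integrable M G2"
    and "\<And>s. s \<in> space M \<Longrightarrow> norm (G1 s - G2 s) \<le> C"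
  shows "norm ((\<integral>s. G1 s \<partial>M) - (\<integral>s. G2 s \<partial>M)) \<le> C"
proof -
  have "norm ((\<integral>s. G1 s \<partial>M) - (\<integral>s. G2 s \<partial>M)) \<le> (\<integral>s. norm (G1 s - G2 s) \<partial>M)"
    using assms(1,2) by (simp flip: Bochner_Integration.integral_diff)
  also have "\<dots> \<le> C"
    using assms by (intro integral_le_const AE_I2) auto
  finally show ?thesis .
qed

end

lemma smooth_with_gradient_step:
  assumes "smooth_with L \<phi> G"
  shows "\<phi> u + s * (1 - s * L / 2) * (norm (G u))\<^sup>2 \<le> \<phi> (u + s *\<^sub>R G u)"
proof -
  have inner: "G u \<bullet> (s *\<^sub>R G u) = s * (norm (G u))\<^sup>2"
    by (simp add: power2_norm_eq_inner)
  have norm: "(norm (s *\<^sub>R G u))\<^sup>2 = s\<^sup>2 * (norm (G u))\<^sup>2"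
    by (simp add: power_mult_distrib)
  have "G u \<bullet> (s *\<^sub>R G u) - L / 2 * (norm (s *\<^sub>R G u))\<^sup>2 = s * (1 - s * L / 2) * (norm (G u))\<^sup>2"
    unfolding inner norm by (simp add: power2_eq_square algebra_simps)
  then show ?thesis
    using smooth_with_lower[OF assms, of u "s *\<^sub>R G u"] by simp
qed

lemma norm_gradient_sq_le_gap:
  assumes "smooth_with L \<phi> G" and "\<And>u. \<phi> u \<le> M" and "L > 0"
  shows "(norm (G u))\<^sup>2 \<le> 2 * L * (M - \<phi> u)"
proof -
  have "\<phi> u + (norm (G u))\<^sup>2 / (2 * L) \<le> M"
    using smooth_with_gradient_step[OF assms(1), of u "1 / L"] assms(2)[of "u + (1 / L) *\<^sub>R G u"] \<open>L > 0\<close>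
    by simp
  then show ?thesis
    using \<open>L > 0\<close> by (simp add: field_simps)
qed

lemma sqrt_diff_lower_bound:
  fixes g g' a n P :: real
  assumes "0 \<le> g'" "0 \<le> a" "0 \<le> n" "0 \<le> P"
    and decrease: "g' \<le> g - a * n\<^sup>2" and bound: "P * sqrt g \<le> n"
  shows "a * n * P \<le> 2 * (sqrt g - sqrt g')"
proof -
  have "g' \<le> g"
    using decrease mult_nonneg_nonneg[OF \<open>0 \<le> a\<close> zero_le_power2[of n]] by linarith
  then have sqrt_le: "sqrt g' \<le> sqrt g"
    by (rule real_sqrt_le_mono)
  show ?thesis
  proof (cases "n = 0")
    case True
    then show ?thesis using sqrt_le by simp
  next
    case False
    have sq: "r\<^sup>2 - r'\<^sup>2 \<le> 2 * r * (r - r')" for r r' :: real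
      using zero_le_power2[of "r - r'"] by (simp add: power2_eq_square algebra_simps)
    have "g - g' = (sqrt g)\<^sup>2 - (sqrt g')\<^sup>2"
      using \<open>0 \<le> g'\<close> \<open>g' \<le> g\<close> by simp
    also have "\<dots> \<le> 2 * sqrt g * (sqrt g - sqrt g')"
      by (rule sq)
    finally have "g - g' \<le> 2 * sqrt g * (sqrt g - sqrt g')" .
    have "n * (a * n * P) = P * (a * n\<^sup>2)"
      by (simp add: power2_eq_square mult_ac)
    also have "\<dots> \<le> P * (g - g')"
      using decrease \<open>0 \<le> P\<close> by (intro mult_left_mono) auto
    also have "\<dots> \<le> P * (2 * sqrt g * (sqrt g - sqrt g'))"
      using \<open>g - g' \<le> 2 * sqrt g * (sqrt g - sqrt g')\<close> \<open>0 \<le> P\<close> by (rule mult_left_mono)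
    also have "\<dots> = 2 * (P * sqrt g) * (sqrt g - sqrt g')"
      by (simp add: mult_ac)
    also have "\<dots> \<le> n * (2 * (sqrt g - sqrt g'))"
      using mult_right_mono[OF bound, of "2 * (sqrt g - sqrt g')"] sqrt_le by (simp add: mult_ac)
    finally show ?thesis
      using False \<open>0 \<le> n\<close> by simp
  qed
qed

definition gradient_ascent :: "real \<Rightarrow> ('a::real_vector \<Rightarrow> 'a) \<Rightarrow> nat \<Rightarrow> 'a \<Rightarrow> 'a" where
  "gradient_ascent s G k = (\<lambda>z. z + s *\<^sub>R G z) ^^ k"

lemma gradient_ascent_0 [simp]: "gradient_ascent s G 0 y = y"
  and gradient_ascent_Suc:
    "gradient_ascent s G (Suc k) y = gradient_ascent s G k y + s *\<^sub>R G (gradient_ascent s G k y)"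
  by (simp_all add: gradient_ascent_def)

context
  fixes \<phi> :: "'a::real_inner \<Rightarrow> real" and G :: "'a \<Rightarrow> 'a" and M L \<mu> s :: real
  assumes le_M: "\<And>u. \<phi> u \<le> M"
    and smooth: "smooth_with L \<phi> G"
    and PL: "\<And>u. 2 * \<mu> * (M - \<phi> u) \<le> (norm (G u))\<^sup>2"
    and mu_pos: "\<mu> > 0" and s_pos: "s > 0" and s_small: "s * L < 2"
begin

lemma gap_gradient_ascent_Suc_le:
  "M - \<phi> (gradient_ascent s G (Suc k) y)
    \<le> M - \<phi> (gradient_ascent s G k y) - s * (1 - s * L / 2) * (norm (G (gradient_ascent s G k y)))\<^sup>2"
  using smooth_with_gradient_step[OF smooth, of "gradient_ascent s G k y" s]
  unfolding gradient_ascent_Suc by linarith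

lemma gap_gradient_ascent_tendsto_zero: "(\<lambda>k. M - \<phi> (gradient_ascent s G k y)) \<longlonglongrightarrow> 0"
proof -
  define a where "a = s * (1 - s * L / 2)"
  define Q where "Q = max (1 / 2) (1 - 2 * a * \<mu>)"
  have "a > 0"
    using s_pos s_small by (simp add: a_def)
  then have Q: "0 \<le> Q" "Q < 1"
    using mu_pos by (simp_all add: Q_def)
  have geometric: "M - \<phi> (gradient_ascent s G k y) \<le> Q ^ k * (M - \<phi> y)" for k
  proof (induction k)
    case (Suc k)
    let ?u = "gradient_ascent s G k y"
    have "M - \<phi> (gradient_ascent s G (Suc k) y) \<le> (M - \<phi> ?u) - a * (2 * \<mu> * (M - \<phi> ?u))"
      using gap_gradient_ascent_Suc_le[of k y, folded a_def] mult_left_mono[OF PL[of ?u] less_imp_le[OF \<open>a > 0\<close>]]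
      by linarith
    also have "\<dots> = (1 - 2 * a * \<mu>) * (M - \<phi> ?u)"
      by (simp add: algebra_simps)
    also have "\<dots> \<le> Q * (M - \<phi> ?u)"
      using le_M[of ?u] by (intro mult_right_mono) (auto simp: Q_def)
    also have "\<dots> \<le> Q * (Q ^ k * (M - \<phi> y))"
      using Suc.IH Q by (intro mult_left_mono) auto
    finally show ?case
      by simp
  qed simp
  show ?thesis
  proof (rule tendsto_sandwich[of "\<lambda>_. 0" _ _ "\<lambda>k. Q ^ k * (M - \<phi> y)"])
    show "\<forall>\<^sub>F k in sequentially. 0 \<le> M - \<phi> (gradient_ascent s G k y)"
      using le_M by (intro always_eventually allI) simp
    show "\<forall>\<^sub>F k in sequentially. M - \<phi> (gradient_ascent s G k y) \<le> Q ^ k * (M - \<phi> y)"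
      using geometric by (intro always_eventually allI)
    show "(\<lambda>k. Q ^ k * (M - \<phi> y)) \<longlonglongrightarrow> 0"
      using Q by (intro tendsto_mult_left_zero LIMSEQ_power_zero) simp
  qed simp
qed

lemma dist_gradient_ascent_le:
  "\<mu> * (1 - s * L / 2)\<^sup>2 * (norm (gradient_ascent s G k y - y))\<^sup>2 \<le> 2 * (M - \<phi> y)"
proof -
  define q where "q = 1 - s * L / 2"
  define gap where "gap k = M - \<phi> (gradient_ascent s G k y)" for k
  have q: "q > 0"
    using s_small by (simp add: q_def)
  have gap_nonneg: "0 \<le> gap k" for k
    using le_M by (simp add: gap_def)
  have path: "norm (gradient_ascent s G k y - y) * (q * sqrt (2 * \<mu>)) \<le> 2 * (sqrt (gap 0) - sqrt (gap k))" for k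
  proof (induction k)
    case (Suc k)
    let ?u = "gradient_ascent s G k y"
    have "sqrt (2 * \<mu>) * sqrt (gap k) \<le> norm (G ?u)"
      using real_sqrt_le_mono[OF PL[of ?u]] by (simp add: gap_def real_sqrt_mult)
    moreover have "gap (Suc k) \<le> gap k - s * q * (norm (G ?u))\<^sup>2"
      unfolding gap_def q_def by (rule gap_gradient_ascent_Suc_le)
    ultimately have step: "s * q * norm (G ?u) * sqrt (2 * \<mu>) \<le> 2 * (sqrt (gap k) - sqrt (gap (Suc k)))"
      using gap_nonneg s_pos q mu_pos by (intro sqrt_diff_lower_bound) auto
    have "norm (gradient_ascent s G (Suc k) y - y) \<le> norm (?u - y) + s * norm (G ?u)"
      using norm_triangle_ineq[of "?u - y" "s *\<^sub>R G ?u"] s_pos by (simp add: gradient_ascent_Suc algebra_simps)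
    then have "norm (gradient_ascent s G (Suc k) y - y) * (q * sqrt (2 * \<mu>))
        \<le> (norm (?u - y) + s * norm (G ?u)) * (q * sqrt (2 * \<mu>))"
      using q mu_pos by (intro mult_right_mono) auto
    also have "\<dots> = norm (?u - y) * (q * sqrt (2 * \<mu>)) + s * q * norm (G ?u) * sqrt (2 * \<mu>)"
      by (simp add: algebra_simps)
    finally show ?case
      using Suc.IH step by simp
  qed simp
  have "norm (gradient_ascent s G k y - y) * (q * sqrt (2 * \<mu>)) \<le> 2 * (sqrt (gap 0) - sqrt (gap k))"
    by (rule path)
  also have "\<dots> \<le> 2 * sqrt (gap 0)"
    using gap_nonneg[of k] by simp
  finally have "(norm (gradient_ascent s G k y - y) * (q * sqrt (2 * \<mu>)))\<^sup>2 \<le> (2 * sqrt (gap 0))\<^sup>2"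
    using q mu_pos by (intro power_mono) auto
  then have "(norm (gradient_ascent s G k y - y))\<^sup>2 * q\<^sup>2 * (2 * \<mu>) \<le> 4 * gap 0"
    using gap_nonneg[of 0] mu_pos by (simp add: power_mult_distrib)
  moreover have "M - \<phi> y = gap 0"
    by (simp add: gap_def)
  ultimately show ?thesis
    unfolding q_def[symmetric] by (simp add: algebra_simps)
qed

text \<open>Quadratic growth in approximate form: the maximizer is replaced by an \<open>\<epsilon>\<close>-maximizer,
  reached by gradient ascent from \<open>y\<close>, so nothing about the set of maximizers is needed.\<close>

lemma pl_quadratic_growth:
  assumes "\<epsilon> > 0"
  obtains u where "M - \<phi> u \<le> \<epsilon>" and "\<mu> * (1 - s * L / 2)\<^sup>2 * (norm (u - y))\<^sup>2 \<le> 2 * (M - \<phi> y)"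
proof -
  have "\<forall>\<^sub>F k in sequentially. M - \<phi> (gradient_ascent s G k y) < \<epsilon>"
    using gap_gradient_ascent_tendsto_zero assms by (rule order_tendstoD(2))
  then obtain k where k: "M - \<phi> (gradient_ascent s G k y) < \<epsilon>"
    by (meson eventually_sequentially order_refl)
  show ?thesis
    by (rule that[OF less_imp_le[OF k] dist_gradient_ascent_le])
qed

end

lemma inverse_one_minus_sq_le:
  fixes m :: real
  assumes "0 < m" and "m \<le> 1 / 4"
  shows "1 / (1 - m)\<^sup>2 \<le> 1 + 4 * m"
proof -
  have "(1 - m)\<^sup>2 * (1 + 4 * m) = 1 + m * (2 - 7 * m + 4 * m\<^sup>2)"
    by (simp add: power2_eq_square algebra_simps)
  moreover have "0 \<le> m * (2 - 7 * m + 4 * m\<^sup>2)"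
    using assms by (intro mult_nonneg_nonneg) auto
  ultimately have "1 \<le> (1 - m)\<^sup>2 * (1 + 4 * m)"
    by linarith
  then show ?thesis
    using assms by (simp add: field_simps)
qed

lemma mult_le_weighted_squares:
  fixes z w c :: real
  assumes "c > 0"
  shows "z * w \<le> c * z\<^sup>2 + w\<^sup>2 / (4 * c)"
proof -
  have "4 * c * (z * w) \<le> 4 * c * (c * z\<^sup>2) + w\<^sup>2"
    using zero_le_power2[of "2 * c * z - w"] by (simp add: power2_eq_square algebra_simps)
  then have "4 * c * (z * w) \<le> 4 * c * (c * z\<^sup>2 + w\<^sup>2 / (4 * c))"
    using assms by (simp add: algebra_simps)
  then show ?thesis
    using assms by simp
qed

lemma power2_add_le_double:
  fixes z w :: real
  shows "(z + w)\<^sup>2 \<le> 2 * z\<^sup>2 + 2 * w\<^sup>2"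
  using zero_le_power2[of "z - w"] by (simp add: power2_eq_square algebra_simps)

context
  fixes f :: "'a::real_inner \<Rightarrow> 'b::real_inner \<Rightarrow> real" and F :: "'a \<Rightarrow> real"
    and gx :: "'a \<Rightarrow> 'b \<Rightarrow> 'a" and gy :: "'a \<Rightarrow> 'b \<Rightarrow> 'b" and Lf \<mu> :: real
  assumes le_F: "\<And>a b. f a b \<le> F a"
    and smooth_x: "\<And>b. smooth_with Lf (\<lambda>a. f a b) (\<lambda>a. gx a b)"
    and smooth_y: "\<And>a. smooth_with Lf (f a) (gy a)"
    and lipschitz_gx: "\<And>a b b'. norm (gx a b - gx a b') \<le> Lf * norm (b - b')"
    and lipschitz_gy: "\<And>a a' b. norm (gy a b - gy a' b) \<le> Lf * norm (a - a')"
    and PL: "\<And>a b. 2 * \<mu> * (F a - f a b) \<le> (norm (gy a b))\<^sup>2"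
    and mu_pos: "\<mu> > 0" and Lf_pos: "Lf > 0"
begin

lemma gap_y_step_le:
  assumes "\<rho> > 0" and "\<rho> * Lf \<le> 1 / 2"
  shows "F a - f a (b + \<rho> *\<^sub>R v)
    \<le> (1 - \<rho> * \<mu>) * (F a - f a b) - \<rho> / 4 * (norm v)\<^sup>2 + \<rho> / 2 * (norm (gy a b - v))\<^sup>2"
proof -
  define g where "g = gy a b"
  define \<delta> where "\<delta> = F a - f a b"
  have "F a - f a (b + \<rho> *\<^sub>R v) \<le> \<delta> - \<rho> * (g \<bullet> v) + Lf / 2 * \<rho>\<^sup>2 * (norm v)\<^sup>2"
    using smooth_with_lower[OF smooth_y[of a], where u=b and h="\<rho> *\<^sub>R v"] \<open>\<rho> > 0\<close>
    by (simp add: g_def \<delta>_def power_mult_distrib)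
  also have "\<dots> = \<delta> - \<rho> / 2 * ((norm g)\<^sup>2 + (norm v)\<^sup>2 - (norm (g - v))\<^sup>2) + Lf / 2 * \<rho>\<^sup>2 * (norm v)\<^sup>2"
    by (simp add: power2_norm_eq_inner inner_diff_left inner_diff_right inner_commute algebra_simps)
  also have "\<dots> \<le> \<delta> - \<rho> / 2 * (2 * \<mu> * \<delta> + (norm v)\<^sup>2 - (norm (g - v))\<^sup>2) + Lf / 2 * \<rho>\<^sup>2 * (norm v)\<^sup>2"
    using PL[of a b] \<open>\<rho> > 0\<close> by (simp add: g_def \<delta>_def)
  also have "\<dots> = (1 - \<rho> * \<mu>) * \<delta> - \<rho> / 2 * (norm v)\<^sup>2 + \<rho> / 2 * (norm (g - v))\<^sup>2
      + (\<rho> * Lf) * (\<rho> / 2 * (norm v)\<^sup>2)"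
    by (simp add: power2_eq_square algebra_simps)
  also have "\<dots> \<le> (1 - \<rho> * \<mu>) * \<delta> - \<rho> / 2 * (norm v)\<^sup>2 + \<rho> / 2 * (norm (g - v))\<^sup>2
      + 1 / 2 * (\<rho> / 2 * (norm v)\<^sup>2)"
    unfolding add_le_cancel_left using mult_right_mono[OF assms(2), of "\<rho> / 2 * (norm v)\<^sup>2"] \<open>\<rho> > 0\<close>
    by simp
  finally show ?thesis
    by (simp add: g_def \<delta>_def)
qed

lemma gap_x_step_le_near_maximizer:
  assumes "F (a + d) - f (a + d) u \<le> \<epsilon>"
  shows "F (a + d) - f (a + d) b \<le> \<epsilon> + (F a - f a b) + Lf * norm (u - b) * norm d + Lf * (norm d)\<^sup>2"
proof -
  have at_u: "f (a + d) u - gx (a + d) u \<bullet> d - Lf / 2 * (norm d)\<^sup>2 \<le> f a u"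
    using smooth_with_lower[OF smooth_x[of u], where u="a + d" and h="- d"] by simp
  have at_b: "f a b \<le> f (a + d) b - gx (a + d) b \<bullet> d + Lf / 2 * (norm d)\<^sup>2"
    using smooth_with_upper[OF smooth_x[of b], where u="a + d" and h="- d"] by simp
  have "(gx (a + d) u - gx (a + d) b) \<bullet> d \<le> norm (gx (a + d) u - gx (a + d) b) * norm d"
    by (rule norm_cauchy_schwarz)
  also have "\<dots> \<le> Lf * norm (u - b) * norm d"
    using lipschitz_gx by (simp add: mult_right_mono)
  finally show ?thesis
    using assms at_u at_b le_F[of a u] by (simp add: inner_diff_left)
qed

lemma gap_x_step_le:
  assumes "\<mu> \<le> Lf" and "\<rho> > 0"
  shows "(1 - \<rho> * \<mu> / 2) * (F (a + d) - f (a + d) b)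
    \<le> F a - f a b + (Lf\<^sup>2 / (\<rho> * \<mu>\<^sup>2) + Lf / (\<rho> * \<mu>) + Lf) * (norm d)\<^sup>2"
proof -
  \<comment> \<open>the ascent step size \<open>s\<close> puts \<open>q = 1 - s * Lf / 2\<close> so close to 1 that \<open>1 / q^2 \<le> 1 + \<mu> / Lf\<close>,
    and the Young weight \<open>c\<close> trades the cross term for half of the contraction\<close>
  define q where "q = 1 - \<mu> / (4 * Lf)"
  define s where "s = \<mu> / (2 * Lf\<^sup>2)"
  define c where "c = \<rho> * \<mu>\<^sup>2 * q\<^sup>2 / 4"
  define \<delta>' where "\<delta>' = F (a + d) - f (a + d) b"
  have q: "q > 0" and inv_q: "1 / q\<^sup>2 \<le> 1 + \<mu> / Lf"
    using inverse_one_minus_sq_le[of "\<mu> / (4 * Lf)"] mu_pos Lf_pos assms(1)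
    by (simp_all add: q_def field_simps)
  have s: "s > 0" "s * Lf < 2" "1 - s * Lf / 2 = q"
    using mu_pos Lf_pos assms(1) by (simp_all add: s_def q_def field_simps power2_eq_square)
  have c: "c > 0"
    using assms(2) mu_pos q by (simp add: c_def)
  have "(1 - \<rho> * \<mu> / 2) * \<delta>' \<le> F a - f a b + (Lf\<^sup>2 / (\<rho> * \<mu>\<^sup>2 * q\<^sup>2) + Lf) * (norm d)\<^sup>2 + \<epsilon>"
    if eps: "\<epsilon> > 0" for \<epsilon>
  proof -
    obtain u where u: "F (a + d) - f (a + d) u \<le> \<epsilon>" and dist: "\<mu> * q\<^sup>2 * (norm (u - b))\<^sup>2 \<le> 2 * \<delta>'"
      using pl_quadratic_growth[where \<phi>="f (a + d)" and G="gy (a + d)" and M="F (a + d)" and L=Lf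
          and s=s and y=b, OF le_F smooth_y PL mu_pos s(1,2) eps]
      unfolding s(3) \<delta>'_def by blast
    have "Lf * norm (u - b) * norm d \<le> c * (norm (u - b))\<^sup>2 + (Lf * norm d)\<^sup>2 / (4 * c)"
      using mult_le_weighted_squares[OF c, of "norm (u - b)" "Lf * norm d"] by (simp add: mult_ac)
    also have "c * (norm (u - b))\<^sup>2 = \<rho> * \<mu> / 4 * (\<mu> * q\<^sup>2 * (norm (u - b))\<^sup>2)"
      by (simp add: c_def power2_eq_square)
    also have "\<dots> \<le> \<rho> * \<mu> / 4 * (2 * \<delta>')"
      using dist assms(2) mu_pos by (intro mult_left_mono) auto
    also have "(Lf * norm d)\<^sup>2 / (4 * c) = Lf\<^sup>2 / (\<rho> * \<mu>\<^sup>2 * q\<^sup>2) * (norm d)\<^sup>2"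
      by (simp add: c_def power_mult_distrib)
    finally show ?thesis
      using gap_x_step_le_near_maximizer[OF u, where b=b] by (simp add: \<delta>'_def algebra_simps)
  qed
  then have "(1 - \<rho> * \<mu> / 2) * \<delta>' \<le> F a - f a b + (Lf\<^sup>2 / (\<rho> * \<mu>\<^sup>2 * q\<^sup>2) + Lf) * (norm d)\<^sup>2"
    by (rule field_le_epsilon)
  also have "Lf\<^sup>2 / (\<rho> * \<mu>\<^sup>2 * q\<^sup>2) = Lf\<^sup>2 / (\<rho> * \<mu>\<^sup>2) * (1 / q\<^sup>2)"
    by simp
  also have "\<dots> \<le> Lf\<^sup>2 / (\<rho> * \<mu>\<^sup>2) * (1 + \<mu> / Lf)"
    using inv_q assms(2) by (intro mult_left_mono) auto
  also have "\<dots> = Lf\<^sup>2 / (\<rho> * \<mu>\<^sup>2) + Lf / (\<rho> * \<mu>)"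
    using Lf_pos mu_pos assms(2) by (simp add: field_simps power2_eq_square)
  finally show ?thesis
    by (simp add: \<delta>'_def mult_right_mono algebra_simps)
qed

lemma gap_x_step_contraction_le:
  assumes "\<mu> \<le> Lf" and "\<rho> > 0" and "\<rho> * Lf \<le> 1 / 2"
  shows "(1 - \<rho> * \<mu>) * (F (a + d) - f (a + d) b) + \<rho> * Lf\<^sup>2 * (norm d)\<^sup>2
    \<le> (1 - \<rho> * \<mu> / 2) * (F a - f a b) + (Lf\<^sup>2 / (\<rho> * \<mu>\<^sup>2) + 2 * Lf / (\<rho> * \<mu>)) * (norm d)\<^sup>2"
proof -
  define \<delta> \<delta>' A K where "\<delta> = F a - f a b" and "\<delta>' = F (a + d) - f (a + d) b" and "A = (norm d)\<^sup>2"
    and "K = Lf\<^sup>2 / (\<rho> * \<mu>\<^sup>2) + Lf / (\<rho> * \<mu>) + Lf"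
  have "\<rho> * \<mu> \<le> \<rho> * Lf"
    using assms(1,2) by (intro mult_left_mono) auto
  then have \<rho>\<mu>: "0 < \<rho> * \<mu>" "\<rho> * \<mu> \<le> 1 / 2"
    using assms(2,3) mu_pos by (simp, linarith)
  have "1 - \<rho> * \<mu> \<le> (1 - \<rho> * \<mu> / 2)\<^sup>2"
    using zero_le_power2[of "\<rho> * \<mu> / 2"] by (simp add: power2_eq_square algebra_simps)
  then have "(1 - \<rho> * \<mu>) * \<delta>' \<le> (1 - \<rho> * \<mu> / 2)\<^sup>2 * \<delta>'"
    using le_F[of "a + d" b] by (intro mult_right_mono) (simp_all add: \<delta>'_def)
  also have "\<dots> = (1 - \<rho> * \<mu> / 2) * ((1 - \<rho> * \<mu> / 2) * \<delta>')"
    by (simp add: power2_eq_square)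
  also have "\<dots> \<le> (1 - \<rho> * \<mu> / 2) * (\<delta> + K * A)"
    using gap_x_step_le[OF assms(1,2), of a d b] \<rho>\<mu>
    by (intro mult_left_mono) (auto simp: \<delta>_def \<delta>'_def A_def K_def)
  also have "\<dots> = (1 - \<rho> * \<mu> / 2) * \<delta> + (1 - \<rho> * \<mu> / 2) * (K * A)"
    by (simp add: algebra_simps)
  also have "\<dots> \<le> (1 - \<rho> * \<mu> / 2) * \<delta> + K * A"
    using mult_left_le_one_le[of "K * A" "1 - \<rho> * \<mu> / 2"] \<rho>\<mu> assms(2) mu_pos Lf_pos
    by (simp add: K_def A_def)
  finally have x_step: "(1 - \<rho> * \<mu>) * \<delta>' \<le> (1 - \<rho> * \<mu> / 2) * \<delta> + K * A" .
  have "K + \<rho> * Lf\<^sup>2 \<le> Lf\<^sup>2 / (\<rho> * \<mu>\<^sup>2) + 2 * Lf / (\<rho> * \<mu>)"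
  proof -
    define r where "r = Lf / (\<rho> * \<mu>)"
    have "\<rho> * Lf\<^sup>2 \<le> Lf / 2"
      using assms(3) Lf_pos by (simp add: power2_eq_square mult_left_mono)
    moreover have "2 * Lf \<le> r"
      using \<rho>\<mu> Lf_pos by (simp add: r_def field_simps)
    moreover have two_r: "2 * Lf / (\<rho> * \<mu>) = 2 * r"
      by (simp add: r_def)
    ultimately show ?thesis
      unfolding K_def two_r r_def[symmetric] using Lf_pos by linarith
  qed
  from mult_right_mono[OF this, of A] x_step show ?thesis
    by (simp add: \<delta>_def \<delta>'_def A_def algebra_simps)
qed

lemma norm_gy_shift_le:
  "(norm (gy (a + d) b - v))\<^sup>2 \<le> 2 * Lf\<^sup>2 * (norm d)\<^sup>2 + 2 * (norm (gy a b - v))\<^sup>2"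
proof -
  have "norm (gy (a + d) b - v) \<le> Lf * norm d + norm (gy a b - v)"
    using norm_triangle_ineq[of "gy (a + d) b - gy a b" "gy a b - v"] lipschitz_gy[of "a + d" b a]
    by simp
  then have "(norm (gy (a + d) b - v))\<^sup>2 \<le> (Lf * norm d + norm (gy a b - v))\<^sup>2"
    by (rule power_mono) simp
  also have "\<dots> \<le> 2 * Lf\<^sup>2 * (norm d)\<^sup>2 + 2 * (norm (gy a b - v))\<^sup>2"
    using power2_add_le_double[of "Lf * norm d" "norm (gy a b - v)"] by (simp add: power_mult_distrib)
  finally show ?thesis .
qed

lemma gap_eq_zero_if_Lf_less_mu:
  assumes "Lf < \<mu>"
  shows "F a = f a b" and "gy a b = 0"
proof -
  have grad_bound: "(norm (gy a b))\<^sup>2 \<le> 2 * Lf * (F a - f a b)"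
    using smooth_y le_F Lf_pos by (rule norm_gradient_sq_le_gap)
  have "2 * (\<mu> - Lf) * (F a - f a b) \<le> 0"
    using order_trans[OF PL[of a b] grad_bound] by (simp add: algebra_simps)
  then show "F a = f a b"
    using assms le_F[of a b] by (simp add: mult_le_0_iff)
  then show "gy a b = 0"
    using grad_bound by simp
qed

lemma gap_step_le:
  assumes "\<rho> > 0" and "\<rho> * Lf \<le> 1 / 2"
  shows "F (a + d) - f (a + d) (b + \<rho> *\<^sub>R v)
    \<le> (1 - \<rho> * \<mu> / 2) * (F a - f a b) + (Lf\<^sup>2 / (\<rho> * \<mu>\<^sup>2) + 2 * Lf / (\<rho> * \<mu>)) * (norm d)\<^sup>2
      - \<rho> / 4 * (norm v)\<^sup>2 + \<rho> * (norm (gy a b - v))\<^sup>2"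
proof (cases "Lf < \<mu>")
  case True
  have "0 \<le> (Lf\<^sup>2 / (\<rho> * \<mu>\<^sup>2) + 2 * Lf / (\<rho> * \<mu>)) * (norm d)\<^sup>2"
    using assms(1) mu_pos Lf_pos by simp
  moreover have "\<rho> / 4 * (norm v)\<^sup>2 \<le> \<rho> * (norm v)\<^sup>2"
    using assms(1) by simp
  ultimately show ?thesis
    using gap_eq_zero_if_Lf_less_mu[OF True] by simp
next
  case False
  let ?\<delta>' = "F (a + d) - f (a + d) b" and ?A = "(norm d)\<^sup>2" and ?V = "(norm (gy a b - v))\<^sup>2"
  have "F (a + d) - f (a + d) (b + \<rho> *\<^sub>R v)
      \<le> (1 - \<rho> * \<mu>) * ?\<delta>' - \<rho> / 4 * (norm v)\<^sup>2 + \<rho> / 2 * (norm (gy (a + d) b - v))\<^sup>2"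
    using gap_y_step_le[OF assms] .
  also have "\<dots> \<le> (1 - \<rho> * \<mu>) * ?\<delta>' - \<rho> / 4 * (norm v)\<^sup>2 + \<rho> / 2 * (2 * Lf\<^sup>2 * ?A + 2 * ?V)"
    using norm_gy_shift_le assms(1) by simp
  also have "\<dots> = (1 - \<rho> * \<mu>) * ?\<delta>' + \<rho> * Lf\<^sup>2 * ?A - \<rho> / 4 * (norm v)\<^sup>2 + \<rho> * ?V"
    by (simp add: algebra_simps)
  also have "\<dots> \<le> (1 - \<rho> * \<mu> / 2) * (F a - f a b) + (Lf\<^sup>2 / (\<rho> * \<mu>\<^sup>2) + 2 * Lf / (\<rho> * \<mu>)) * ?A
      - \<rho> / 4 * (norm v)\<^sup>2 + \<rho> * ?V"
    using gap_x_step_contraction_le[OF _ assms, of a d b] False by simp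
  finally show ?thesis .
qed

end

lemma expf_gradx:
  fixes fs :: "'s \<Rightarrow> 'a::euclidean_space \<Rightarrow> 'b::real_normed_vector \<Rightarrow> real"
  assumes D: "prob_space D"
    and integ: "\<And>a b. integrable D (\<lambda>s. fs s a b)"
    and diffx: "\<And>s a b. s \<in> space D \<Longrightarrow> \<exists>G. GDERIV (\<lambda>u. fs s u b) a :> G"
    and Lxx: "\<And>s b. s \<in> space D \<Longrightarrow> Lf-lipschitz_on UNIV (\<lambda>a. gradx (fs s) a b)"
    and Lxy: "\<And>s a. s \<in> space D \<Longrightarrow> Lf-lipschitz_on UNIV (\<lambda>b. gradx (fs s) a b)"
  shows "smooth_with Lf (\<lambda>a. expf D fs a b) (\<lambda>a. gradx (expf D fs) a b)"
    and "norm (gradx (expf D fs) a b - gradx (expf D fs) a b') \<le> Lf * norm (b - b')"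
proof -
  interpret prob_space D
    by (rule D)
  have sample_smooth: "smooth_with Lf (\<lambda>a. fs s a b) (\<lambda>a. gradx (fs s) a b)" if "s \<in> space D" for s b
    using gderiv_gradx[where g="fs s" and y=b, OF diffx[OF that]] Lxx[OF that]
    by (rule lipschitz_gradient_imp_smooth_with)
  note expectation_facts = smooth_with_expectation[OF integ sample_smooth]
    integrable_gradient[OF integ sample_smooth]
  have gradx_expf: "gradx (expf D fs) a b = (\<integral>s. gradx (fs s) a b \<partial>D)" for a b
    unfolding expf_def by (rule gradx_eq) (rule smooth_with_imp_gderiv[OF expectation_facts(1)])
  show "smooth_with Lf (\<lambda>a. expf D fs a b) (\<lambda>a. gradx (expf D fs) a b)"
    unfolding gradx_expf unfolding expf_def by (rule expectation_facts(1))
  show "norm (gradx (expf D fs) a b - gradx (expf D fs) a b') \<le> Lf * norm (b - b')"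
    unfolding gradx_expf using expectation_facts(2) lipschitz_on_normD[OF Lxy]
    by (intro norm_integral_diff_le) auto
qed

lemma expf_grady:
  fixes fs :: "'s \<Rightarrow> 'a::real_normed_vector \<Rightarrow> 'b::euclidean_space \<Rightarrow> real"
  assumes "prob_space D"
    and "\<And>a b. integrable D (\<lambda>s. fs s a b)"
    and "\<And>s a b. s \<in> space D \<Longrightarrow> \<exists>G. GDERIV (\<lambda>u. fs s a u) b :> G"
    and "\<And>s a. s \<in> space D \<Longrightarrow> Lf-lipschitz_on UNIV (\<lambda>b. grady (fs s) a b)"
    and "\<And>s b. s \<in> space D \<Longrightarrow> Lf-lipschitz_on UNIV (\<lambda>a. grady (fs s) a b)"
  shows "smooth_with Lf (expf D fs a) (grady (expf D fs) a)"
    and "norm (grady (expf D fs) a b - grady (expf D fs) a' b) \<le> Lf * norm (a - a')"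
proof -
  let ?fs' = "\<lambda>s b a. fs s a b"
  have swap: "expf D fs a = (\<lambda>b. expf D ?fs' b a)"
    "grady (expf D fs) a = (\<lambda>b. gradx (expf D ?fs') b a)" for a
    by (simp_all add: fun_eq_iff expf_def[abs_def] grady_eq_gradx_swap)
  note swapped = expf_gradx[of D ?fs' Lf, OF assms[unfolded grady_eq_gradx_swap]]
  show "smooth_with Lf (expf D fs a) (grady (expf D fs) a)"
    unfolding swap by (rule swapped(1))
  show "norm (grady (expf D fs) a b - grady (expf D fs) a' b) \<le> Lf * norm (a - a')"
    using swapped(2) unfolding swap by simp
qed

lemma step_size_coefficient_le:
  fixes Lf \<mu> \<eta> lam \<gamma> :: real
  assumes "0 < Lf" "0 < \<mu>" "0 < \<eta>" "0 < lam" "0 < \<gamma>"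
    and \<gamma>: "\<gamma> \<le> lam * \<mu> / (16 * (Lf * (1 + Lf / \<mu> / 2)))"
  shows "(Lf\<^sup>2 / (\<eta> * lam * \<mu>\<^sup>2) + 2 * Lf / (\<eta> * lam * \<mu>)) * (norm (\<eta> *\<^sub>R w))\<^sup>2
    \<le> \<eta> / (8 * \<gamma>) * (norm w)\<^sup>2"
proof -
  define L where "L = Lf * (1 + Lf / \<mu> / 2)"
  have "L > 0"
    using assms by (simp add: L_def add_pos_nonneg)
  moreover have "\<gamma> \<le> lam * \<mu> / (16 * L)"
    using \<gamma> by (simp add: L_def)
  ultimately have "16 * L * \<gamma> \<le> lam * \<mu>"
    by (simp add: field_simps)
  then have "2 * L / (lam * \<mu>) \<le> 1 / (8 * \<gamma>)"
    using assms by (simp add: field_simps)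
  have "(Lf\<^sup>2 / (\<eta> * lam * \<mu>\<^sup>2) + 2 * Lf / (\<eta> * lam * \<mu>)) * \<eta>\<^sup>2 = \<eta> * (2 * L / (lam * \<mu>))"
    using assms by (simp add: L_def field_simps power2_eq_square)
  also have "\<dots> \<le> \<eta> * (1 / (8 * \<gamma>))"
    using \<open>2 * L / (lam * \<mu>) \<le> 1 / (8 * \<gamma>)\<close> by (rule mult_left_mono) (use assms in simp)
  also have "\<dots> = \<eta> / (8 * \<gamma>)"
    by simp
  finally show ?thesis
    unfolding norm_scaleR power_mult_distrib power2_abs mult.assoc[symmetric]
    by (rule mult_right_mono) simp
qed

theorem lemma1:
  fixes D :: "'xi measure"
    and fs :: "'xi \<Rightarrow> real^'d \<Rightarrow> real^'p \<Rightarrow> real"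
    and \<mu> Lf \<gamma> lam :: real
    and \<eta> \<alpha> \<beta> :: "nat \<Rightarrow> real"
    and \<xi> :: "nat \<Rightarrow> 'xi"
    and x xt :: "nat \<Rightarrow> real^'d"
    and y yt :: "nat \<Rightarrow> real^'p"
    and v :: "nat \<Rightarrow> real^'p"
    and w :: "nat \<Rightarrow> real^'d"
  defines "f \<equiv> expf D fs"
    and "F \<equiv> maxf (expf D fs)"
    and "\<kappa> \<equiv> Lf / \<mu>"
    and "L \<equiv> Lf * (1 + Lf / \<mu> / 2)"
  assumes D: "prob_space D"
    (* the stochastic objective is well defined and has partial gradients *)
    and integ: "\<And>a b. integrable D (\<lambda>s. fs s a b)"
    and diffx: "\<And>s a b. s \<in> space D \<Longrightarrow> \<exists>G. GDERIV (\<lambda>u. fs s u b) a :> G"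
    and diffy: "\<And>s a b. s \<in> space D \<Longrightarrow> \<exists>G. GDERIV (\<lambda>u. fs s a u) b :> G"
    (* (A1) *)
    and mu_pos: "\<mu> > 0"
    and argmax: "\<And>a. \<exists>b. \<forall>b'. f a b' \<le> f a b"
    and PL: "\<And>a b. (norm (grady f a b))\<^sup>2 \<ge> 2 * \<mu> * (F a - f a b)"
    (* (A2) *)
    and Lxx: "\<And>s b. s \<in> space D \<Longrightarrow> Lf-lipschitz_on UNIV (\<lambda>a. gradx (fs s) a b)"
    and Lxy: "\<And>s a. s \<in> space D \<Longrightarrow> Lf-lipschitz_on UNIV (\<lambda>b. gradx (fs s) a b)"
    and Lyx: "\<And>s b. s \<in> space D \<Longrightarrow> Lf-lipschitz_on UNIV (\<lambda>a. grady (fs s) a b)"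
    and Lyy: "\<And>s a. s \<in> space D \<Longrightarrow> Lf-lipschitz_on UNIV (\<lambda>b. grady (fs s) a b)"
    (* samples and parameters *)
    and samples: "\<And>t. t \<ge> 1 \<Longrightarrow> \<xi> t \<in> space D"
    and eta_pos: "\<And>t. t \<ge> 1 \<Longrightarrow> \<eta> t > 0"
    and alpha: "\<And>t. t \<ge> 1 \<Longrightarrow> 0 < \<alpha> t \<and> \<alpha> t \<le> 1"
    and beta: "\<And>t. t \<ge> 1 \<Longrightarrow> 0 < \<beta> t \<and> \<beta> t \<le> 1"
    (* MSGDA *)
    and v1: "v 1 = grady (fs (\<xi> 1)) (x 1) (y 1)"
    and w1: "w 1 = gradx (fs (\<xi> 1)) (x 1) (y 1)"
    and ytil: "\<And>t. t \<ge> 1 \<Longrightarrow> yt (t + 1) = y t + lam *\<^sub>R v t"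
    and xtil: "\<And>t. t \<ge> 1 \<Longrightarrow> xt (t + 1) = x t - \<gamma> *\<^sub>R w t"
    and ystep: "\<And>t. t \<ge> 1 \<Longrightarrow> y (t + 1) = y t + \<eta> t *\<^sub>R (yt (t + 1) - y t)"
    and xstep: "\<And>t. t \<ge> 1 \<Longrightarrow> x (t + 1) = x t + \<eta> t *\<^sub>R (xt (t + 1) - x t)"
    and vstep: "\<And>t. t \<ge> 1 \<Longrightarrow> v (t + 1) = grady (fs (\<xi> (t + 1))) (x (t + 1)) (y (t + 1))
                  + (1 - \<alpha> (t + 1)) *\<^sub>R (v t - grady (fs (\<xi> (t + 1))) (x t) (y t))"
    and wstep: "\<And>t. t \<ge> 1 \<Longrightarrow> w (t + 1) = gradx (fs (\<xi> (t + 1))) (x (t + 1)) (y (t + 1))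
                  + (1 - \<beta> (t + 1)) *\<^sub>R (w t - gradx (fs (\<xi> (t + 1))) (x t) (y t))"
    (* step sizes *)
    and gamma: "0 < \<gamma>" "\<gamma> \<le> lam * \<mu> / (16 * L)"
    and lambda: "\<And>t. t \<ge> 1 \<Longrightarrow> 0 < lam \<and> lam \<le> 1 / (2 * Lf * \<eta> t)"
  shows "\<forall>t\<ge>1. F (x (t + 1)) - f (x (t + 1)) (y (t + 1))
           \<le> (1 - \<eta> t * lam * \<mu> / 2) * (F (x t) - f (x t) (y t))
             + \<eta> t / (8 * \<gamma>) * (norm (xt (t + 1) - x t))\<^sup>2
             - \<eta> t / (4 * lam) * (norm (yt (t + 1) - y t))\<^sup>2
             + \<eta> t * lam * (norm (grady f (x t) (y t) - v t))\<^sup>2"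
proof (intro allI impI)
  fix t :: nat
  assume "t \<ge> 1"
  define \<rho> where "\<rho> = \<eta> t * lam"
  define d where "d = \<eta> t *\<^sub>R (xt (t + 1) - x t)"
  have eta: "\<eta> t > 0" and lam: "0 < lam" "lam \<le> 1 / (2 * Lf * \<eta> t)"
    using eta_pos lambda \<open>t \<ge> 1\<close> by auto
  have "Lf \<ge> 0"
    using lipschitz_on_nonneg[OF Lxx[OF samples[of 1]]] by simp
  \<comment> \<open>\<open>Lf = 0\<close> is excluded only through the junk value \<open>1 / 0 = 0\<close> in the bound on \<open>lam\<close>\<close>
  then have Lf: "Lf > 0"
    using lam by (cases "Lf = 0") auto
  have \<rho>: "\<rho> > 0" "\<rho> * Lf \<le> 1 / 2"
    using eta lam Lf by (auto simp: \<rho>_def field_simps)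
  have "F (x t + d) - f (x t + d) (y t + \<rho> *\<^sub>R v t)
      \<le> (1 - \<rho> * \<mu> / 2) * (F (x t) - f (x t) (y t))
        + (Lf\<^sup>2 / (\<rho> * \<mu>\<^sup>2) + 2 * Lf / (\<rho> * \<mu>)) * (norm d)\<^sup>2
        - \<rho> / 4 * (norm (v t))\<^sup>2 + \<rho> * (norm (grady f (x t) (y t) - v t))\<^sup>2"
    unfolding f_def F_def
    using le_maxf[of "expf D fs", OF argmax[unfolded f_def]] expf_gradx[OF D integ diffx Lxx Lxy]
      expf_grady[OF D integ diffy Lyy Lyx] PL[unfolded f_def F_def] mu_pos Lf \<rho>
    by (intro gap_step_le) auto
  moreover have "x (t + 1) = x t + d" and "y (t + 1) = y t + \<rho> *\<^sub>R v t"
    using xstep ystep ytil \<open>t \<ge> 1\<close> by (simp_all add: d_def \<rho>_def)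
  moreover have "(Lf\<^sup>2 / (\<rho> * \<mu>\<^sup>2) + 2 * Lf / (\<rho> * \<mu>)) * (norm d)\<^sup>2
      \<le> \<eta> t / (8 * \<gamma>) * (norm (xt (t + 1) - x t))\<^sup>2"
    unfolding \<rho>_def d_def using step_size_coefficient_le Lf mu_pos eta lam(1) gamma by (simp add: L_def)
  moreover have "\<rho> / 4 * (norm (v t))\<^sup>2 = \<eta> t / (4 * lam) * (norm (yt (t + 1) - y t))\<^sup>2"
    unfolding ytil[OF \<open>t \<ge> 1\<close>] using lam by (simp add: \<rho>_def power_mult_distrib power2_eq_square)
  ultimately show "F (x (t + 1)) - f (x (t + 1)) (y (t + 1))
           \<le> (1 - \<eta> t * lam * \<mu> / 2) * (F (x t) - f (x t) (y t))
             + \<eta> t / (8 * \<gamma>) * (norm (xt (t + 1) - x t))\<^sup>2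
             - \<eta> t / (4 * lam) * (norm (yt (t + 1) - y t))\<^sup>2
             + \<eta> t * lam * (norm (grady f (x t) (y t) - v t))\<^sup>2"
    by (simp add: \<rho>_def)
qed

end
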